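(* Let $1\le p,q\le\infty$, $s_1,s_2\in\mathbb{R}$ and $\sigma\in M^{p,q}_{v_{s_1,s_2}\otimes1}(\mathbb{R}^{2d})$. Define $\sigma^*(x,\eta)=\overline{\sigma(\eta,x)}$, $(x,\eta)\in\mathbb{R}^{2d}$. Then $\sigma^*\in M^{p,q}_{v_{s_2,s_1}\otimes1}(\mathbb{R}^{2d})$.
   Context: $V_\Psi\sigma(z,\zeta)=\int_{\mathbb{R}^{2d}}e^{-2\pi i\zeta\cdot y}\sigma(y)\overline{\Psi(y-z)}dy$ for $\Psi\in\mathcal{S}(\mathbb{R}^{2d})\setminus\{0\}$. $\langle x\rangle=(1+|x|^2)^{1/2}$. $M^{p,q}_{v_{s_1,s_2}\otimes1}(\mathbb{R}^{2d})$ is the space of $\sigma\in\mathcal{S}'(\mathbb{R}^{2d})$ with $\left(\int_{\mathbb{R}^{2d}}\left(\int_{\mathbb{R}^{2d}}|V_\Psi\sigma(z_1,z_2,\zeta)|^p\langle z_1\rangle^{ps_1}\langle z_2\rangle^{ps_2}dz_1dz_2\right)^{q/p}d\zeta\right)^{1/q}<\infty$ (usual modifications for infinite indices); this does not depend on the choice of $\Psi$. *)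

theory Defs
  imports "HOL-Analysis.Analysis" "HOL-Probability.Essential_Supremum"
begin

fun diter :: "'a list \<Rightarrow> ('a::euclidean_space \<Rightarrow> complex) \<Rightarrow> 'a \<Rightarrow> complex" where
  "diter [] f = f"
| "diter (v # vs) f = (\<lambda>x. frechet_derivative (diter vs f) (at x) v)"

definition schwartz :: "('a::euclidean_space \<Rightarrow> complex) \<Rightarrow> bool" where
  "schwartz f \<longleftrightarrow>
     (\<forall>vs x. diter vs f differentiable (at x)) \<and>
     (\<forall>vs (N::nat). bounded (range (\<lambda>x. (1 + norm x) ^ N * norm (diter vs f x))))"

definition schwartz_seminorm :: "nat \<Rightarrow> ('a::euclidean_space \<Rightarrow> complex) \<Rightarrow> real" where
  "schwartz_seminorm N f =
     (SUP xv \<in> UNIV \<times> {vs. set vs \<subseteq> Basis \<and> length vs \<le> N}.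
        (1 + norm (fst xv)) ^ N * norm (diter (snd xv) f (fst xv)))"

text \<open>Tempered distributions: linear functionals on the Schwartz space, continuous
  w.r.t. the Schwartz topology (values on non-Schwartz functions are irrelevant).\<close>
definition tempered :: "(('a::euclidean_space \<Rightarrow> complex) \<Rightarrow> complex) \<Rightarrow> bool" where
  "tempered T \<longleftrightarrow>
     (\<forall>\<phi> \<psi>. schwartz \<phi> \<longrightarrow> schwartz \<psi> \<longrightarrow> T (\<lambda>x. \<phi> x + \<psi> x) = T \<phi> + T \<psi>) \<and>
     (\<forall>c \<phi>. schwartz \<phi> \<longrightarrow> T (\<lambda>x. c * \<phi> x) = c * T \<phi>) \<and>
     (\<exists>C N. \<forall>\<phi>. schwartz \<phi> \<longrightarrow> norm (T \<phi>) \<le> C * schwartz_seminorm N \<phi>)"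

type_synonym 'd R2d = "(real^'d) \<times> (real^'d)"

definition stft :: "('d::finite R2d \<Rightarrow> complex) \<Rightarrow> (('d R2d \<Rightarrow> complex) \<Rightarrow> complex)
                    \<Rightarrow> 'd R2d \<Rightarrow> 'd R2d \<Rightarrow> complex" where
  "stft \<Psi> \<sigma> z \<zeta> = \<sigma> (\<lambda>y. exp (- 2 * pi * \<i> * complex_of_real (\<zeta> \<bullet> y)) * cnj (\<Psi> (y - z)))"

definition epow :: "ennreal \<Rightarrow> real \<Rightarrow> ennreal" where
  "epow x r = (if x = \<infinity> then \<infinity> else ennreal (enn2real x powr r))"

definition lpnorm :: "ennreal \<Rightarrow> ('a::euclidean_space \<Rightarrow> ennreal) \<Rightarrow> ennreal" where
  "lpnorm p f = (if p = \<infinity> then esssup lborel f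
                 else epow (\<integral>\<^sup>+ x. epow (f x) (enn2real p) \<partial>lborel) (1 / enn2real p))"

definition jbr :: "'a::real_normed_vector \<Rightarrow> real" where
  "jbr x = sqrt (1 + norm x ^ 2)"

text \<open>Membership in M^{p,q}_{v_{s1,s2} (x) 1}(R^{2d}).  The space does not depend on the
  window, so we ask for some nonzero Schwartz window.\<close>
definition modsp :: "ennreal \<Rightarrow> ennreal \<Rightarrow> real \<Rightarrow> real \<Rightarrow>
                     (('d::finite R2d \<Rightarrow> complex) \<Rightarrow> complex) set" where
  "modsp p q s1 s2 = {\<sigma>. tempered \<sigma> \<and>
     (\<exists>\<Psi>. schwartz \<Psi> \<and> \<Psi> \<noteq> (\<lambda>_. 0) \<and>
        lpnorm q (\<lambda>\<zeta>. lpnorm p (\<lambda>z.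
           ennreal (norm (stft \<Psi> \<sigma> z \<zeta>) * jbr (fst z) powr s1 * jbr (snd z) powr s2)))
        < \<infinity>)}"

text \<open>sigma^*(x,eta) = conj(sigma(eta,x)), extended to tempered distributions:
  <sigma^*, phi> = conj <sigma, (a,b) |-> conj(phi(b,a))>.\<close>
definition dist_adj :: "(('a \<times> 'a \<Rightarrow> complex) \<Rightarrow> complex) \<Rightarrow> (('a \<times> 'a \<Rightarrow> complex) \<Rightarrow> complex)" where
  "dist_adj \<sigma> = (\<lambda>\<phi>. cnj (\<sigma> (\<lambda>(a, b). cnj (\<phi> (b, a)))))"

end

theory Submission
  imports Defs
begin

text \<open>The adjoint symbol only swaps the two space variables and conjugates. Conjugating and
  swapping the window as well, the short-time Fourier transform of \<open>\<sigma>\<^sup>*\<close> at \<open>(z, \<zeta>)\<close> is the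
  conjugate of that of \<open>\<sigma>\<close> at \<open>(swap z, - swap \<zeta>)\<close>. Swapping exchanges the two weights, and
  swap and reflection preserve Lebesgue measure, hence every mixed norm. Tempered distributions
  and Schwartz functions are preserved because swap is a linear isometry permuting the standard
  basis, so it permutes the family of seminorms.\<close>

locale measure_preserving_involution =
  fixes M :: "'a measure" and T :: "'a \<Rightarrow> 'a"
  assumes T_measurable [measurable]: "T \<in> M \<rightarrow>\<^sub>M M"
    and involutive [simp]: "T (T x) = x"
    and distr_eq: "distr M M T = M"
begin

text \<open>No measurability of \<open>f\<close> is assumed, since the mixed norms are taken of arbitrary
  functions; hence the argument goes through the simple functions below \<open>f \<circ> T\<close>.\<close>
lemma nn_integral_comp_le: "(\<integral>\<^sup>+ x. f (T x) \<partial>M) \<le> integral\<^sup>N M f"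
  unfolding nn_integral_def[of M "\<lambda>x. f (T x)"]
proof (rule SUP_least, clarify)
  fix g assume g: "simple_function M g" "g \<le> (\<lambda>x. f (T x))"
  have [measurable]: "g \<in> borel_measurable M"
    using g(1) by (rule borel_measurable_simple_function)
  have "integral\<^sup>S M g = (\<integral>\<^sup>+ x. g (T (T x)) \<partial>M)"
    using nn_integral_eq_simple_integral[OF g(1)] by simp
  also have "\<dots> = (\<integral>\<^sup>+ y. g (T y) \<partial>distr M M T)"
    by (rule nn_integral_distr[symmetric]) simp_all
  also have "\<dots> \<le> integral\<^sup>N M f"
    unfolding distr_eq by (rule nn_integral_mono) (metis involutive g(2) le_fun_def)
  finally show "integral\<^sup>S M g \<le> integral\<^sup>N M f" .
qed

lemma nn_integral_comp: "(\<integral>\<^sup>+ x. f (T x) \<partial>M) = integral\<^sup>N M f"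
proof (rule antisym)
  show "integral\<^sup>N M f \<le> (\<integral>\<^sup>+ x. f (T x) \<partial>M)"
    using nn_integral_comp_le[of "\<lambda>x. f (T x)"] by simp
qed (fact nn_integral_comp_le)

lemma AE_comp:
  assumes "AE x in M. P x"
  shows "AE x in M. P (T x)"
proof -
  from assms obtain N where N: "{x \<in> space M. \<not> P x} \<subseteq> N" "emeasure M N = 0" "N \<in> sets M"
    by (rule AE_E)
  have "emeasure M (T -` N \<inter> space M) = emeasure (distr M M T) N"
    using N(3) by (simp add: emeasure_distr)
  also have "\<dots> = 0"
    using N(2) by (simp add: distr_eq)
  finally show ?thesis
    using N(1) measurable_space[OF T_measurable]
    by (intro AE_I[of _ _ "T -` N \<inter> space M"]) (auto intro: measurable_sets[OF T_measurable N(3)])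
qed

lemma filtermap_ae_filter: "filtermap T (ae_filter M) = ae_filter M"
proof (rule filter_eqI)
  show "eventually P (filtermap T (ae_filter M)) \<longleftrightarrow> eventually P (ae_filter M)" for P
    unfolding eventually_filtermap
  proof
    assume "AE x in M. P (T x)"
    from AE_comp[OF this] show "AE x in M. P x"
      by simp
  qed (fact AE_comp)
qed

lemma esssup_comp: "esssup M (\<lambda>x. f (T x)) = esssup M f"
proof (cases "f \<in> borel_measurable M")
  case True
  then have "(\<lambda>x. f (T x)) \<in> borel_measurable M"
    by measurable
  moreover have "inj T"
    by (metis involutive injI)
  ultimately show ?thesis
    using True by (simp add: esssup_def Limsup_filtermap_eq[symmetric] filtermap_ae_filter)
next
  case False
  have "(\<lambda>x. f (T x)) \<notin> borel_measurable M"
  proof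
    assume "(\<lambda>x. f (T x)) \<in> borel_measurable M"
    then have "(\<lambda>x. f (T (T x))) \<in> borel_measurable M"
      by measurable
    with False show False
      by simp
  qed
  with False show ?thesis
    by (simp add: esssup_def)
qed

end

lemma lpnorm_comp:
  assumes "measure_preserving_involution lborel T"
  shows "lpnorm p (\<lambda>x. f (T x)) = lpnorm p f"
  using measure_preserving_involution.esssup_comp[OF assms, of f]
    measure_preserving_involution.nn_integral_comp[OF assms, of "\<lambda>x. epow (f x) (enn2real p)"]
  by (simp add: lpnorm_def)

lemma measure_preserving_involution_swap:
  "measure_preserving_involution lborel (prod.swap :: 'a::euclidean_space \<times> 'a \<Rightarrow> 'a \<times> 'a)"
proof
  have "(lborel :: ('a \<times> 'a) measure) = distr lborel lborel (\<lambda>(x, y). (y, x))"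
    using lborel_pair.distr_pair_swap by (simp add: lborel_prod)
  moreover have "(\<lambda>(x, y). (y, x)) = prod.swap"
    by auto
  ultimately show "distr lborel lborel prod.swap = (lborel :: ('a \<times> 'a) measure)"
    by metis
qed (simp_all add: measurable_lborel1 measurable_lborel2 borel_measurable_continuous_onI
      continuous_on_swap)

lemma measure_preserving_involution_uminus:
  "measure_preserving_involution lborel (uminus :: 'a::euclidean_space \<Rightarrow> 'a)"
proof
  have "(lborel :: 'a measure) = distr lborel borel uminus"
    using lborel_affine[of "-1" 0] by (simp add: density_1)
  moreover have "distr lborel lborel (uminus :: 'a \<Rightarrow> 'a) = distr lborel borel uminus"
    by (rule measure_eqI) (auto simp: emeasure_distr)
  ultimately show "distr lborel lborel uminus = (lborel :: 'a measure)"
    by simp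
qed simp_all

lemma mixed_lpnorm_swap_uminus:
  fixes G :: "'a::euclidean_space \<times> 'a \<Rightarrow> 'a \<times> 'a \<Rightarrow> ennreal"
  shows "lpnorm q (\<lambda>\<zeta>. lpnorm p (\<lambda>z. G (prod.swap z) (- prod.swap \<zeta>)))
    = lpnorm q (\<lambda>\<zeta>. lpnorm p (\<lambda>z. G z \<zeta>))"
proof -
  note swap = lpnorm_comp[OF measure_preserving_involution_swap]
  have "lpnorm q (\<lambda>\<zeta>. lpnorm p (\<lambda>z. G (prod.swap z) (- prod.swap \<zeta>)))
      = lpnorm q (\<lambda>\<zeta>. lpnorm p (\<lambda>z. G z (- \<zeta>)))"
    by (simp add: swap[of p "\<lambda>z. G z _"] swap[of q "\<lambda>\<zeta>. lpnorm p (\<lambda>z. G z (- \<zeta>))"])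
  also have "\<dots> = lpnorm q (\<lambda>\<zeta>. lpnorm p (\<lambda>z. G z \<zeta>))"
    by (rule lpnorm_comp[OF measure_preserving_involution_uminus])
  finally show ?thesis .
qed

lemma diter_cnj_comp:
  fixes L :: "'a::euclidean_space \<Rightarrow> 'a" and \<phi> :: "'a \<Rightarrow> complex"
  assumes L: "bounded_linear L" and diff: "\<And>vs x. diter vs \<phi> differentiable (at x)"
  shows "diter vs (\<lambda>y. cnj (\<phi> (L y))) = (\<lambda>x. cnj (diter (map L vs) \<phi> (L x)))"
proof (induction vs)
  case (Cons v vs)
  show ?case
  proof
    fix x
    let ?h = "diter (map L vs) \<phi>"
    have "(?h has_derivative frechet_derivative ?h (at (L x))) (at (L x))"
      using diff frechet_derivative_works by blast
    from has_derivative_compose[OF bounded_linear_imp_has_derivative[OF L] this]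
    have "((\<lambda>y. cnj (?h (L y))) has_derivative
        (\<lambda>v. cnj (frechet_derivative ?h (at (L x)) (L v)))) (at x)"
      using bounded_linear.has_derivative[OF bounded_linear_cnj] by (simp add: o_def)
    then have "frechet_derivative (\<lambda>y. cnj (?h (L y))) (at x) v
        = cnj (frechet_derivative ?h (at (L x)) (L v))"
      by (simp add: frechet_derivative_at[symmetric])
    then show "diter (v # vs) (\<lambda>y. cnj (\<phi> (L y))) x = cnj (diter (map L (v # vs)) \<phi> (L x))"
      by (simp add: Cons.IH)
  qed
qed simp

lemma schwartz_cnj_comp:
  fixes L :: "'a::euclidean_space \<Rightarrow> 'a" and \<phi> :: "'a \<Rightarrow> complex"
  assumes L: "bounded_linear L" and isometric: "\<And>x. norm (L x) = norm x" and "schwartz \<phi>"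
  shows "schwartz (\<lambda>y. cnj (\<phi> (L y)))"
proof -
  have diff: "\<And>vs x. diter vs \<phi> differentiable (at x)"
    and decay: "\<And>vs N. bounded (range (\<lambda>x. (1 + norm x) ^ N * norm (diter vs \<phi> x)))"
    using \<open>schwartz \<phi>\<close> unfolding schwartz_def by auto
  note diter_eq = diter_cnj_comp[OF L diff]
  have "diter vs (\<lambda>y. cnj (\<phi> (L y))) differentiable (at x)" for vs x
  proof -
    obtain D where "(diter (map L vs) \<phi> has_derivative D) (at (L x))"
      using diff unfolding differentiable_def by blast
    from has_derivative_compose[OF bounded_linear_imp_has_derivative[OF L] this]
    have "((\<lambda>y. cnj (diter (map L vs) \<phi> (L y))) has_derivative (\<lambda>v. cnj (D (L v)))) (at x)"
      using bounded_linear.has_derivative[OF bounded_linear_cnj] by (simp add: o_def)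
    then show ?thesis
      unfolding diter_eq differentiable_def by blast
  qed
  moreover have "bounded (range (\<lambda>x. (1 + norm x) ^ N * norm (diter vs (\<lambda>y. cnj (\<phi> (L y))) x)))"
    for vs N
  proof (rule bounded_subset[OF decay[of N "map L vs"]], clarify)
    show "(1 + norm x) ^ N * norm (diter vs (\<lambda>y. cnj (\<phi> (L y))) x)
        \<in> range (\<lambda>x. (1 + norm x) ^ N * norm (diter (map L vs) \<phi> x))" for x
      by (rule image_eqI[of _ _ "L x"]) (simp_all add: diter_eq isometric)
  qed
  ultimately show ?thesis
    unfolding schwartz_def by blast
qed

text \<open>Each seminorm is a supremum over pairs (point, list of basis directions); \<open>L\<close> permutes
  these pairs, so the set of values is unchanged.\<close>
lemma schwartz_seminorm_cnj_comp:
  fixes L :: "'a::euclidean_space \<Rightarrow> 'a" and \<phi> :: "'a \<Rightarrow> complex"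
  assumes L: "bounded_linear L" and isometric: "\<And>x. norm (L x) = norm x" and "schwartz \<phi>"
    and involutive: "\<And>x. L (L x) = x" and Basis: "\<And>b. b \<in> Basis \<Longrightarrow> L b \<in> Basis"
  shows "schwartz_seminorm N (\<lambda>y. cnj (\<phi> (L y))) = schwartz_seminorm N \<phi>"
proof -
  have "\<And>vs x. diter vs \<phi> differentiable (at x)"
    using \<open>schwartz \<phi>\<close> unfolding schwartz_def by auto
  note diter_eq = diter_cnj_comp[OF L this]
  define I :: "('a \<times> 'a list) set" where "I = UNIV \<times> {vs. set vs \<subseteq> Basis \<and> length vs \<le> N}"
  define g where "g xv = (L (fst xv), map L (snd xv))" for xv :: "'a \<times> 'a list"
  define weighted where "weighted \<psi> xv = (1 + norm (fst xv)) ^ N * norm (diter (snd xv) \<psi> (fst xv))"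
    for \<psi> and xv :: "'a \<times> 'a list"
  have g_involutive: "g (g xv) = xv" for xv
    by (simp add: g_def comp_def involutive)
  have "g ` I = I"
  proof
    show "g ` I \<subseteq> I"
      using Basis by (fastforce simp: I_def g_def)
    then show "I \<subseteq> g ` I"
      by (metis g_involutive image_eqI image_subset_iff subsetI)
  qed
  moreover have "weighted (\<lambda>y. cnj (\<phi> (L y))) = weighted \<phi> \<circ> g"
    by (simp add: fun_eq_iff weighted_def g_def diter_eq isometric)
  ultimately have "weighted (\<lambda>y. cnj (\<phi> (L y))) ` I = weighted \<phi> ` I"
    by (metis image_comp)
  then show ?thesis
    by (simp add: schwartz_seminorm_def I_def weighted_def)
qed

lemma bounded_linear_swap: "bounded_linear (prod.swap :: 'a::real_normed_vector \<times> 'a \<Rightarrow> _)"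
  unfolding prod.swap_def by (intro bounded_linear_Pair bounded_linear_fst bounded_linear_snd)

lemma norm_swap: "norm (prod.swap x) = norm (x :: 'a::real_normed_vector \<times> 'a)"
  by (cases x) (simp add: norm_Pair add.commute)

lemma swap_Basis: "b \<in> Basis \<Longrightarrow> prod.swap b \<in> (Basis :: ('a::euclidean_space \<times> 'a) set)"
  by (auto simp: Basis_prod_def)

lemma dist_adj_eq: "dist_adj \<sigma> \<phi> = cnj (\<sigma> (\<lambda>y. cnj (\<phi> (prod.swap y))))"
  unfolding dist_adj_def by (simp add: case_prod_unfold prod.swap_def)

lemma tempered_dist_adj:
  fixes \<sigma> :: "('a::euclidean_space \<times> 'a \<Rightarrow> complex) \<Rightarrow> complex"
  assumes "tempered \<sigma>"
  shows "tempered (dist_adj \<sigma>)"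
proof -
  note schwartz_adj = schwartz_cnj_comp[OF bounded_linear_swap norm_swap]
  note seminorm_adj = schwartz_seminorm_cnj_comp[OF bounded_linear_swap norm_swap _ swap_swap swap_Basis]
  obtain C N where bound: "\<And>\<phi>. schwartz \<phi> \<Longrightarrow> norm (\<sigma> \<phi>) \<le> C * schwartz_seminorm N \<phi>"
    using assms unfolding tempered_def by blast
  have "dist_adj \<sigma> (\<lambda>x. \<phi> x + \<psi> x) = dist_adj \<sigma> \<phi> + dist_adj \<sigma> \<psi>"
    if "schwartz \<phi>" "schwartz \<psi>" for \<phi> \<psi>
    using assms schwartz_adj[OF that(1)] schwartz_adj[OF that(2)]
    by (simp add: tempered_def dist_adj_eq)
  moreover have "dist_adj \<sigma> (\<lambda>x. c * \<phi> x) = c * dist_adj \<sigma> \<phi>" if "schwartz \<phi>" for c \<phi>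
    using assms schwartz_adj[OF that]
    by (simp add: tempered_def dist_adj_eq)
  moreover have "norm (dist_adj \<sigma> \<phi>) \<le> C * schwartz_seminorm N \<phi>" if "schwartz \<phi>" for \<phi>
    using bound[OF schwartz_adj[OF that]] seminorm_adj[OF that] by (simp add: dist_adj_eq)
  ultimately show ?thesis
    unfolding tempered_def by blast
qed

lemma stft_dist_adj:
  fixes \<Psi> :: "'d::finite R2d \<Rightarrow> complex"
  shows "stft (\<lambda>y. cnj (\<Psi> (prod.swap y))) (dist_adj \<sigma>) z \<zeta>
    = cnj (stft \<Psi> \<sigma> (prod.swap z) (- prod.swap \<zeta>))"
proof -
  have "\<zeta> \<bullet> prod.swap y = prod.swap \<zeta> \<bullet> y" and "prod.swap (prod.swap y - z) = y - prod.swap z"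
    for y :: "'d R2d"
    by (cases y, cases z, cases \<zeta>, simp add: inner_prod_def add.commute)+
  then show ?thesis
    by (simp add: stft_def dist_adj_eq exp_cnj)
qed

theorem lemma2p10:
  fixes p q :: ennreal and s1 s2 :: real
    and \<sigma> :: "('d::finite R2d \<Rightarrow> complex) \<Rightarrow> complex"
  assumes "1 \<le> p" and "1 \<le> q"
    and "\<sigma> \<in> modsp p q s1 s2"
  shows "dist_adj \<sigma> \<in> modsp p q s2 s1"
proof -
  from assms(3) obtain \<Psi> where "tempered \<sigma>" "schwartz \<Psi>" "\<Psi> \<noteq> (\<lambda>_. 0)"
    and finite: "lpnorm q (\<lambda>\<zeta>. lpnorm p (\<lambda>z.
           ennreal (norm (stft \<Psi> \<sigma> z \<zeta>) * jbr (fst z) powr s1 * jbr (snd z) powr s2))) < \<infinity>"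
    unfolding modsp_def by blast
  define \<Psi>' where "\<Psi>' = (\<lambda>y. cnj (\<Psi> (prod.swap y)))"
  define G where "G z \<zeta> = ennreal (norm (stft \<Psi> \<sigma> z \<zeta>) * jbr (fst z) powr s1 * jbr (snd z) powr s2)"
    for z \<zeta>
  have "lpnorm q (\<lambda>\<zeta>. lpnorm p (\<lambda>z.
           ennreal (norm (stft \<Psi>' (dist_adj \<sigma>) z \<zeta>) * jbr (fst z) powr s2 * jbr (snd z) powr s1)))
      = lpnorm q (\<lambda>\<zeta>. lpnorm p (\<lambda>z. G (prod.swap z) (- prod.swap \<zeta>)))"
    by (simp add: \<Psi>'_def stft_dist_adj G_def mult.commute mult.left_commute)
  also have "\<dots> = lpnorm q (\<lambda>\<zeta>. lpnorm p (\<lambda>z. G z \<zeta>))"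
    by (rule mixed_lpnorm_swap_uminus)
  also have "\<dots> < \<infinity>"
    using finite by (simp add: G_def)
  finally have "lpnorm q (\<lambda>\<zeta>. lpnorm p (\<lambda>z.
           ennreal (norm (stft \<Psi>' (dist_adj \<sigma>) z \<zeta>) * jbr (fst z) powr s2 * jbr (snd z) powr s1)))
      < \<infinity>" .
  moreover have "schwartz \<Psi>'"
    unfolding \<Psi>'_def by (rule schwartz_cnj_comp[OF bounded_linear_swap norm_swap \<open>schwartz \<Psi>\<close>])
  moreover have "\<Psi>' \<noteq> (\<lambda>_. 0)"
    using \<open>\<Psi> \<noteq> (\<lambda>_. 0)\<close> by (metis \<Psi>'_def complex_cnj_zero_iff swap_swap)
  ultimately show ?thesis
    using tempered_dist_adj[OF \<open>tempered \<sigma>\<close>] unfolding modsp_def by blast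
qed

end
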